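(* Let $\gamma>0$ and $\lambda_k\coloneqq-\gamma+ik$ for $k\in\mathbb{N}$. Let $A$ be the diagonal operator on $\ell^2$ given by $A(\zeta_k)_{k\in\mathbb{N}}=(\lambda_k\zeta_k)_{k\in\mathbb{N}}$ with domain $D(A)=\{(\zeta_k)\in\ell^2:(\lambda_k\zeta_k)\in\ell^2\}$ (which generates an exponentially stable $C_0$-semigroup). Then for every $\alpha>0$, \[ \liminf_{t\to\infty} t^{\alpha/2}\big\|e^{A^{-1}t}(-A)^{-\alpha}\big\|\ge\Big(\frac{\alpha}{2e\gamma}\Big)^{\alpha/2}. \]
   Context: $\ell^2$ is the Hilbert space of square-summable complex sequences. For this diagonal operator, $e^{A^{-1}t}(-A)^{-\alpha}$ is the diagonal operator with entries $e^{t/\lambda_k}(-\lambda_k)^{-\alpha}$ (principal branch). *)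

theory Defs
  imports "HOL-Analysis.Analysis"
begin

definition l2 :: "(nat \<Rightarrow> complex) set" where
  "l2 = {x. summable (\<lambda>k. (cmod (x k))^2)}"

definition l2_norm :: "(nat \<Rightarrow> complex) \<Rightarrow> real" where
  "l2_norm x = sqrt (\<Sum>k. (cmod (x k))^2)"

definition l2_op_norm :: "((nat \<Rightarrow> complex) \<Rightarrow> (nat \<Rightarrow> complex)) \<Rightarrow> real" where
  "l2_op_norm T = Sup ((\<lambda>x. l2_norm (T x)) ` {x \<in> l2. l2_norm x \<le> 1})"

definition diag_op :: "(nat \<Rightarrow> complex) \<Rightarrow> (nat \<Rightarrow> complex) \<Rightarrow> (nat \<Rightarrow> complex)" where
  "diag_op d x = (\<lambda>k. d k * x k)"

definition lam :: "real \<Rightarrow> nat \<Rightarrow> complex" where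
  "lam \<gamma> k = - complex_of_real \<gamma> + \<i> * of_nat k"

text \<open>The operator e^{A^{-1} t} (-A)^{-alpha}: diagonal with entries
  e^{t/lambda_k} (-lambda_k)^{-alpha}, principal branch (powr uses the principal Ln).\<close>
definition semigroup_frac_op :: "real \<Rightarrow> real \<Rightarrow> real \<Rightarrow> (nat \<Rightarrow> complex) \<Rightarrow> (nat \<Rightarrow> complex)" where
  "semigroup_frac_op \<gamma> \<alpha> t =
     diag_op (\<lambda>k. exp (complex_of_real t / lam \<gamma> k) * (- lam \<gamma> k) powr (- complex_of_real \<alpha>))"

end

theory Submission imports Defs "HOL-Real_Asymp.Real_Asymp" begin

text \<open>The operator norm of a diagonal operator dominates each of its entries, and for
  \<open>r = t / |\<lambda>\<^sub>k|\<^sup>2\<close> the \<open>k\<close>-th entry of \<open>t powr (\<alpha>/2) e\<^bsup>A\<^sup>-\<^sup>1t\<^esup>(-A)\<^sup>-\<^sup>\<alpha>\<close> has modulus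
  \<open>exp (- \<gamma> r) r powr (\<alpha>/2)\<close>. This function of \<open>r\<close> is maximal at \<open>r = \<alpha> / (2\<gamma>)\<close>, with value
  \<open>(\<alpha> / (2e\<gamma>)) powr (\<alpha>/2)\<close>, and the choice \<open>k = \<lfloor>\<surd>(2\<gamma>t/\<alpha>)\<rfloor>\<close> makes \<open>r\<close> tend to
  that maximiser as \<open>t \<rightarrow> \<infinity>\<close>.\<close>

lemma l2_norm_diag_op_le:
  assumes bound: "\<And>k. cmod (d k) \<le> M" and x: "x \<in> l2"
  shows "l2_norm (diag_op d x) \<le> M * l2_norm x"
proof -
  have M0: "M \<ge> 0" using bound[of 0] norm_ge_zero order_trans by blast
  have sx: "summable (\<lambda>k. (cmod (x k))^2)" using x by (simp add: l2_def)
  have le: "(cmod (diag_op d x k))^2 \<le> M^2 * (cmod (x k))^2" for k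
  proof -
    have "cmod (diag_op d x k) \<le> M * cmod (x k)"
      by (simp add: diag_op_def norm_mult mult_right_mono bound)
    then have "(cmod (diag_op d x k))^2 \<le> (M * cmod (x k))^2"
      by (intro power_mono) auto
    then show ?thesis by (simp add: power_mult_distrib)
  qed
  have sM: "summable (\<lambda>k. M^2 * (cmod (x k))^2)" using sx by (rule summable_mult)
  have sd: "summable (\<lambda>k. (cmod (diag_op d x k))^2)"
    by (rule summable_comparison_test[OF _ sM]) (use le in auto)
  have "(\<Sum>k. (cmod (diag_op d x k))^2) \<le> (\<Sum>k. M^2 * (cmod (x k))^2)"
    by (rule suminf_le[OF le sd sM])
  also have "\<dots> = M^2 * (\<Sum>k. (cmod (x k))^2)" using sx by (rule suminf_mult)
  finally have "l2_norm (diag_op d x) \<le> sqrt (M^2 * (\<Sum>k. (cmod (x k))^2))"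
    unfolding l2_norm_def by (rule real_sqrt_le_mono)
  also have "\<dots> = M * l2_norm x" using M0 by (simp add: real_sqrt_mult l2_norm_def)
  finally show ?thesis .
qed

lemma norm_le_l2_op_norm_diag_op:
  assumes bound: "\<And>k. cmod (d k) \<le> M"
  shows "cmod (d k) \<le> l2_op_norm (diag_op d)"
proof -
  define e where "e = (\<lambda>j. if j = k then (1::complex) else 0)"
  have e_sq: "(\<lambda>j. (cmod (e j))^2) = (\<lambda>j. if j = k then 1 else 0)"
    by (auto simp: e_def)
  have e_l2: "e \<in> l2"
    unfolding l2_def mem_Collect_eq e_sq by (simp add: summable_single)
  have e_norm: "l2_norm e = 1"
    unfolding l2_norm_def e_sq using sums_single[of k "\<lambda>_. 1::real", THEN sums_unique] by simp
  have de_sq: "(\<lambda>j. (cmod (diag_op d e j))^2) = (\<lambda>j. if j = k then (cmod (d k))^2 else 0)"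
    by (auto simp: e_def diag_op_def)
  have de_norm: "l2_norm (diag_op d e) = cmod (d k)"
    unfolding l2_norm_def de_sq
    using sums_single[of k "\<lambda>_. (cmod (d k))^2", THEN sums_unique] by simp
  have bdd: "bdd_above ((\<lambda>x. l2_norm (diag_op d x)) ` {x \<in> l2. l2_norm x \<le> 1})"
  proof (rule bdd_aboveI2)
    fix x assume "x \<in> {x \<in> l2. l2_norm x \<le> 1}"
    then have x: "x \<in> l2" "l2_norm x \<le> 1" by auto
    have M0: "M \<ge> 0" using bound[of 0] norm_ge_zero order_trans by blast
    have "l2_norm (diag_op d x) \<le> M * l2_norm x" using l2_norm_diag_op_le[OF bound x(1)] .
    also have "\<dots> \<le> M" using x(2) M0 by (simp add: mult_left_le)
    finally show "l2_norm (diag_op d x) \<le> M" .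
  qed
  show ?thesis unfolding l2_op_norm_def de_norm[symmetric]
    by (rule cSup_upper[OF _ bdd]) (use e_l2 e_norm in auto)
qed

lemma norm_semigroup_frac_entry:
  assumes "\<gamma> > 0"
  shows "cmod (exp (complex_of_real t / lam \<gamma> k) * (- lam \<gamma> k) powr (- complex_of_real \<alpha>))
     = exp (- \<gamma> * t / (\<gamma>^2 + (real k)^2)) * (\<gamma>^2 + (real k)^2) powr (- \<alpha> / 2)"
proof -
  have norm_lam: "cmod (lam \<gamma> k) = sqrt (\<gamma>^2 + (real k)^2)"
    by (simp add: lam_def cmod_def)
  have "cmod ((- lam \<gamma> k) powr (- complex_of_real \<alpha>)) = sqrt (\<gamma>^2 + (real k)^2) powr (- \<alpha>)"
    by (subst norm_powr_real_powr') (auto simp: norm_lam)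
  also have "\<dots> = (\<gamma>^2 + (real k)^2) powr (- \<alpha> / 2)"
    by (simp add: powr_half_sqrt[symmetric] powr_powr)
  finally show ?thesis by (simp add: norm_mult Re_divide lam_def)
qed

lemma l2_op_norm_semigroup_frac_op_ge:
  fixes k :: nat
  assumes \<gamma>: "\<gamma> > 0" and \<alpha>: "\<alpha> > 0" and t: "t \<ge> 0"
  defines "r \<equiv> t / (\<gamma>^2 + (real k)^2)"
  shows "exp (- \<gamma> * r) * r powr (\<alpha> / 2) \<le> t powr (\<alpha> / 2) * l2_op_norm (semigroup_frac_op \<gamma> \<alpha> t)"
proof -
  define s where "s j = \<gamma>^2 + (real j)^2" for j
  define d where "d = (\<lambda>j. exp (complex_of_real t / lam \<gamma> j) * (- lam \<gamma> j) powr (- complex_of_real \<alpha>))"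
  have s_pos: "s j > 0" for j using \<gamma> by (simp add: s_def add_pos_nonneg)
  have d_norm: "cmod (d j) = exp (- \<gamma> * t / s j) * s j powr (- \<alpha> / 2)" for j
    unfolding d_def s_def by (rule norm_semigroup_frac_entry[OF \<gamma>])
  have d_bound: "cmod (d j) \<le> (\<gamma>^2) powr (- \<alpha> / 2)" for j
  proof -
    have "cmod (d j) \<le> 1 * (\<gamma>^2) powr (- \<alpha> / 2)"
      unfolding d_norm
    proof (rule mult_mono)
      show "exp (- \<gamma> * t / s j) \<le> 1"
        using t \<gamma> s_pos[of j] by (simp add: divide_nonneg_pos)
      show "s j powr (- \<alpha> / 2) \<le> (\<gamma>^2) powr (- \<alpha> / 2)"
        using \<alpha> \<gamma> by (intro powr_mono2') (auto simp: s_def)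
    qed auto
    then show ?thesis by simp
  qed
  have "exp (- \<gamma> * r) * r powr (\<alpha> / 2) = t powr (\<alpha> / 2) * cmod (d k)"
    using t s_pos[of k]
    by (simp add: d_norm r_def s_def powr_divide powr_minus_divide field_simps)
  also have "\<dots> \<le> t powr (\<alpha> / 2) * l2_op_norm (diag_op d)"
    using norm_le_l2_op_norm_diag_op[OF d_bound] by (intro mult_left_mono) auto
  finally show ?thesis by (simp add: semigroup_frac_op_def d_def)
qed

lemma tendsto_div_floor_sqrt_sq:
  fixes c \<gamma> :: real
  assumes c: "c > 0" and \<gamma>: "\<gamma> > 0"
  shows "((\<lambda>t. t / (\<gamma>^2 + (real (nat \<lfloor>sqrt (c * t)\<rfloor>))^2)) \<longlongrightarrow> 1 / c) at_top"
proof (rule tendsto_sandwich)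
  define k where "k t = real (nat \<lfloor>sqrt (c * t)\<rfloor>)" for t
  have k_bounds: "t > 0 \<and> sqrt (c * t) \<ge> 1 \<and> sqrt (c * t) - 1 \<le> k t \<and> k t \<le> sqrt (c * t)"
    if "t \<ge> 1 / c" for t
  proof -
    have "c * t \<ge> 1" using that c by (simp add: field_simps)
    then have "sqrt (c * t) \<ge> 1" by simp
    moreover have "t > 0" using that c by (smt (verit) divide_pos_pos)
    ultimately show ?thesis unfolding k_def by linarith
  qed
  show "eventually (\<lambda>t. t / (\<gamma>^2 + c * t) \<le> t / (\<gamma>^2 + (k t)^2)) at_top"
    using eventually_ge_at_top[of "1 / c"]
  proof eventually_elim
    case (elim t)
    note kb = k_bounds[OF elim]
    have "k t ^ 2 \<le> sqrt (c * t) ^ 2" using kb by (intro power_mono) (auto simp: k_def)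
    also have "\<dots> = c * t" using kb c by simp
    finally show ?case using kb \<gamma> c
      by (intro divide_left_mono) (auto intro!: add_pos_nonneg mult_pos_pos)
  qed
  show "eventually (\<lambda>t. t / (\<gamma>^2 + (k t)^2) \<le> t / (\<gamma>^2 + (sqrt (c * t) - 1)^2)) at_top"
    using eventually_ge_at_top[of "1 / c"]
  proof eventually_elim
    case (elim t)
    note kb = k_bounds[OF elim]
    have "(sqrt (c * t) - 1) ^ 2 \<le> k t ^ 2" using kb by (intro power_mono) auto
    then show ?case using kb \<gamma>
      by (intro divide_left_mono) (auto intro!: add_pos_nonneg mult_pos_pos)
  qed
  show "((\<lambda>t. t / (\<gamma>^2 + c * t)) \<longlongrightarrow> 1 / c) at_top"
    using c \<gamma> by (real_asymp simp: inverse_eq_divide)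
  show "((\<lambda>t. t / (\<gamma>^2 + (sqrt (c * t) - 1)^2)) \<longlongrightarrow> 1 / c) at_top"
    using c \<gamma> by (real_asymp simp: inverse_eq_divide powr_half_sqrt)
qed

lemma exp_neg_mult_powr:
  fixes y a :: real
  assumes "y \<ge> 0"
  shows "exp (- a) * y powr a = (y / exp 1) powr a"
  using assms by (simp add: powr_divide exp_powr_real exp_minus field_simps)

theorem mainTheorem3:
  fixes \<gamma> \<alpha> :: real
  assumes "\<gamma> > 0" and "\<alpha> > 0"
  shows "Liminf at_top (\<lambda>t::real. ereal (t powr (\<alpha> / 2) * l2_op_norm (semigroup_frac_op \<gamma> \<alpha> t)))
           \<ge> ereal ((\<alpha> / (2 * exp 1 * \<gamma>)) powr (\<alpha> / 2))"
proof -
  define h where "h r = exp (- \<gamma> * r) * r powr (\<alpha> / 2)" for r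
  define r where "r t = t / (\<gamma>^2 + (real (nat \<lfloor>sqrt (2 * \<gamma> / \<alpha> * t)\<rfloor>))^2)" for t
  have "(r \<longlongrightarrow> 1 / (2 * \<gamma> / \<alpha>)) at_top"
    unfolding r_def by (rule tendsto_div_floor_sqrt_sq) (use assms in auto)
  then have "(r \<longlongrightarrow> \<alpha> / (2 * \<gamma>)) at_top" by simp
  then have "((\<lambda>t. h (r t)) \<longlongrightarrow> h (\<alpha> / (2 * \<gamma>))) at_top"
    unfolding h_def by (intro tendsto_intros) (use assms in auto)
  moreover have "h (\<alpha> / (2 * \<gamma>)) = (\<alpha> / (2 * exp 1 * \<gamma>)) powr (\<alpha> / 2)"
    using exp_neg_mult_powr[of "\<alpha> / (2 * \<gamma>)" "\<alpha> / 2"] assms by (simp add: h_def field_simps)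
  ultimately have "Liminf at_top (\<lambda>t. ereal (h (r t))) = ereal ((\<alpha> / (2 * exp 1 * \<gamma>)) powr (\<alpha> / 2))"
    by (simp add: lim_imp_Liminf)
  moreover have "eventually (\<lambda>t. h (r t) \<le> t powr (\<alpha> / 2) * l2_op_norm (semigroup_frac_op \<gamma> \<alpha> t)) at_top"
    using eventually_ge_at_top[of 0]
    unfolding h_def r_def by eventually_elim (rule l2_op_norm_semigroup_frac_op_ge[OF assms])
  then have "Liminf at_top (\<lambda>t. ereal (h (r t))) \<le>
      Liminf at_top (\<lambda>t. ereal (t powr (\<alpha> / 2) * l2_op_norm (semigroup_frac_op \<gamma> \<alpha> t)))"
    by (intro Liminf_mono) (auto elim: eventually_mono)
  ultimately show ?thesis by simp
qed

end
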